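(* Let $n\ge 2$, let $a_1,\dots,a_n$ be positive integers, and let $s=[2a_1,-2a_2,2a_3,\dots,(-1)^{n-1}2a_n]$ and $s'=[2a_1,-2a_2,\dots,(-1)^{n-2}2a_{n-1}]$. Then $\Delta_{K(s)}(t)$ and $\Delta_{K(s')}(t)$ have only real zeros, the product $\Delta_{K(s)}(t)\Delta_{K(s')}(t)$ has no repeated zeros, and the zeros of $\Delta_{K(s)}(t)$ and $\Delta_{K(s')}(t)$ are interlaced.
   Context: For a finite sequence $r=[2a_1,2a_2,\dots,2a_n]$ of nonzero even integers, $K(r)$ denotes the 2-bridge knot or link whose associated rational number has the even continued fraction expansion $1/(2a_1-1/(2a_2-\cdots-1/(2a_n)))$. Let $M(r)$ be the $n\times n$ integer matrix whose $(k,k)$-entry is $a_k$, whose $(k,k+1)$-entry is $1$ ($1\le k\le n-1$), and whose other entries are $0$; $\Delta_{K(r)}(t)=\det(tM(r)-M(r)^T)$ is the (reduced) Alexander polynomial of $K(r)$ (up to sign). Interlacing: two real-rooted polynomials with zeros $\alpha_1\le\dots\le\alpha_n$ and $\beta_1\le\dots\le\beta_m$ (with multiplicity) are interlaced if $|m-n|\le1$ and the zeros alternate: if $n=m$, either $\alpha_1\le\beta_1\le\alpha_2\le\dots\le\alpha_n\le\beta_n$ or $\beta_1\le\alpha_1\le\dots\le\beta_n\le\alpha_n$; if $n=m+1$, $\alpha_1\le\beta_1\le\alpha_2\le\dots\le\beta_m\le\alpha_{m+1}$; if $m=n+1$, $\beta_1\le\alpha_1\le\beta_2\le\dots\le\alpha_n\le\beta_{n+1}$.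 *)

theory Defs
  imports "Jordan_Normal_Form.Determinant" "HOL-Computational_Algebra.Computational_Algebra"
begin

text \<open>The matrix M(r) for a sequence r = [2a_1,...,2a_n] of nonzero even integers
  (given as the list of the even integers 2a_k; the diagonal entry is a_k = r_k div 2).\<close>
definition seifert_mat :: "int list \<Rightarrow> int mat" where
  "seifert_mat r = mat (length r) (length r)
     (\<lambda>(i,j). if i = j then r ! i div 2 else if j = i + 1 then 1 else 0)"

definition alexander_poly :: "int list \<Rightarrow> int poly" where
  "alexander_poly r = det (mat (length r) (length r)
     (\<lambda>(i,j). [: - (seifert_mat r $$ (j,i)), seifert_mat r $$ (i,j) :]))"

definition alexander_poly_real :: "int list \<Rightarrow> real poly" where
  "alexander_poly_real r = map_poly of_int (alexander_poly r)"

definition real_rooted :: "real poly \<Rightarrow> bool" where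
  "real_rooted p \<longleftrightarrow> (\<forall>z::complex. poly (map_poly complex_of_real p) z = 0 \<longrightarrow> z \<in> \<real>)"

definition no_repeated_zeros :: "real poly \<Rightarrow> bool" where
  "no_repeated_zeros p \<longleftrightarrow> rsquarefree (map_poly complex_of_real p)"

definition interlaced_lists :: "real list \<Rightarrow> real list \<Rightarrow> bool" where
  "interlaced_lists al be \<longleftrightarrow>
    (length al = length be \<and>
       ((\<forall>i<length al. al ! i \<le> be ! i) \<and> (\<forall>i. i + 1 < length al \<longrightarrow> be ! i \<le> al ! (i+1))
      \<or> (\<forall>i<length al. be ! i \<le> al ! i) \<and> (\<forall>i. i + 1 < length al \<longrightarrow> al ! i \<le> be ! (i+1))))
  \<or> (length al = length be + 1 \<and>
       (\<forall>i<length be. al ! i \<le> be ! i \<and> be ! i \<le> al ! (i+1)))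
  \<or> (length be = length al + 1 \<and>
       (\<forall>i<length al. be ! i \<le> al ! i \<and> al ! i \<le> be ! (i+1)))"

definition interlaced :: "real poly \<Rightarrow> real poly \<Rightarrow> bool" where
  "interlaced p q \<longleftrightarrow>
     interlaced_lists (sorted_list_of_multiset (proots p)) (sorted_list_of_multiset (proots q))"

end

theory Submission
  imports Defs "Jordan_Normal_Form.Char_Poly"
begin

(* For the alternating sequence s_m = [2a_1, -2a_2, ..., (-1)^(m-1) 2a_m] the matrix
   t M(s_m) - M(s_m)^T is tridiagonal, so Laplace expansion gives a three-term recurrence for
   the Alexander polynomials A_m = Delta_{K(s_m)}.  After multiplying A_m by a suitable sign
   sign_norm m the recurrence becomes
       F_0 = 1,  F_1 = a_1 (t - 1),  F_(k+2) = a_(k+2) (t - 1) F_(k+1) - t F_k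
   with all a_i > 0.  This is a Sturm-like sequence: by induction on k, F_k has k distinct positive
   zeros, and F_(k-1) alternates in sign on them.  Then F_(k+1) alternates in sign on the points
   0 < (zeros of F_k) < M for M large, so the intermediate value theorem produces k+1 zeros of
   F_(k+1) strictly interlacing those of F_k. *)

definition tridiag :: "(nat \<Rightarrow> 'a) \<Rightarrow> (nat \<Rightarrow> 'a) \<Rightarrow> (nat \<Rightarrow> 'a) \<Rightarrow> nat \<Rightarrow> 'a::comm_ring_1 mat" where
  "tridiag d u l m = mat m m
     (\<lambda>(i,j). if i = j then d i else if j = i + 1 then u i else if i = j + 1 then l j else 0)"

lemma tridiag_carrier: "tridiag d u l m \<in> carrier_mat m m"
  by (simp add: tridiag_def)

lemma tridiag_cong: "(\<And>i. i < m \<Longrightarrow> d i = d' i) \<Longrightarrow> tridiag d u l m = tridiag d' u l m"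
  by (rule eq_matI) (auto simp: tridiag_def)

lemma det_tridiag_0: "det (tridiag d u l 0) = 1"
  by (rule det_dim_zero) (simp add: tridiag_def)

lemma det_tridiag_1: "det (tridiag d u l 1) = d 0"
proof -
  have empty: "mat_delete (tridiag d u l 1) 0 0 \<in> carrier_mat 0 0"
    using mat_delete_carrier[OF tridiag_carrier, of d u l 1 0 0] by simp
  have entry: "tridiag d u l 1 $$ (0,0) = d 0" by (simp add: tridiag_def)
  have "det (tridiag d u l 1) = (\<Sum>j<1. tridiag d u l 1 $$ (0,j) * cofactor (tridiag d u l 1) 0 j)"
    by (rule laplace_expansion_row[OF tridiag_carrier]) simp
  also have "\<dots> = tridiag d u l 1 $$ (0,0) * cofactor (tridiag d u l 1) 0 0" by simp
  also have "\<dots> = d 0"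
    unfolding entry cofactor_def det_dim_zero[OF empty] by simp
  finally show ?thesis .
qed

text \<open>Deleting the last row and the second-to-last column of a tridiagonal matrix leaves a matrix
  whose last column is zero except for the entry u k.\<close>
lemma det_tridiag_minor:
  "det (mat_delete (tridiag d u l (Suc (Suc k))) (Suc k) k) = u k * det (tridiag d u l k)"
proof -
  define B where "B = mat_delete (tridiag d u l (Suc (Suc k))) (Suc k) k"
  have B: "B \<in> carrier_mat (Suc k) (Suc k)"
    unfolding B_def using mat_delete_carrier[OF tridiag_carrier, of d u l "Suc (Suc k)"] by simp
  have minor: "mat_delete B k k = tridiag d u l k"
    unfolding B_def by (rule eq_matI) (auto simp: tridiag_def mat_delete_def)
  have above_zero: "(\<Sum>i<k. B $$ (i,k) * cofactor B i k) = 0"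
    unfolding B_def by (rule sum.neutral) (auto simp: tridiag_def mat_delete_def)
  have entry: "B $$ (k,k) = u k" by (simp add: B_def tridiag_def mat_delete_def)
  have "det B = (\<Sum>i<Suc k. B $$ (i,k) * cofactor B i k)"
    by (rule laplace_expansion_column[OF B]) simp
  also have "\<dots> = B $$ (k,k) * cofactor B k k"
    using above_zero by simp
  also have "\<dots> = u k * det (tridiag d u l k)"
    unfolding entry cofactor_def minor by simp
  finally show ?thesis by (simp add: B_def)
qed

lemma det_tridiag_Suc_Suc:
  "det (tridiag d u l (Suc (Suc k)))
     = d (Suc k) * det (tridiag d u l (Suc k)) - u k * l k * det (tridiag d u l k)"
proof -
  define A where "A = tridiag d u l (Suc (Suc k))"
  have A: "A \<in> carrier_mat (Suc (Suc k)) (Suc (Suc k))"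
    unfolding A_def by (rule tridiag_carrier)
  have minor: "mat_delete A (Suc k) (Suc k) = tridiag d u l (Suc k)"
    unfolding A_def by (rule eq_matI) (auto simp: tridiag_def mat_delete_def)
  have left_zero: "(\<Sum>j<k. A $$ (Suc k,j) * cofactor A (Suc k) j) = 0"
    unfolding A_def by (rule sum.neutral) (auto simp: tridiag_def)
  have entries: "A $$ (Suc k,k) = l k" "A $$ (Suc k,Suc k) = d (Suc k)"
    by (simp_all add: A_def tridiag_def)
  have cofactors: "cofactor A (Suc k) (Suc k) = det (tridiag d u l (Suc k))"
    "cofactor A (Suc k) k = - (u k * det (tridiag d u l k))"
    unfolding cofactor_def minor using det_tridiag_minor[of d u l k] by (simp_all add: A_def)
  have "det A = (\<Sum>j<Suc (Suc k). A $$ (Suc k,j) * cofactor A (Suc k) j)"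
    by (rule laplace_expansion_row[OF A]) simp
  also have "\<dots> = A $$ (Suc k,k) * cofactor A (Suc k) k
      + A $$ (Suc k,Suc k) * cofactor A (Suc k) (Suc k)"
    using left_zero by simp
  finally show ?thesis
    unfolding entries cofactors by (simp add: A_def algebra_simps)
qed

lemma alexander_poly_tridiag:
  "alexander_poly r = det (tridiag (\<lambda>i. [:-(r!i div 2), r!i div 2:]) (\<lambda>_. [:0,1:]) (\<lambda>_. [:-1,0:])
     (length r))"
  unfolding alexander_poly_def
  by (rule arg_cong[where f=det], rule eq_matI) (auto simp: tridiag_def seifert_mat_def)

definition alt_coeff :: "(nat \<Rightarrow> int) \<Rightarrow> nat \<Rightarrow> int" where
  "alt_coeff a i = (-1)^i * a (Suc i)"

definition alt_alexander :: "(nat \<Rightarrow> int) \<Rightarrow> nat \<Rightarrow> int poly" where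
  "alt_alexander a m =
     det (tridiag (\<lambda>i. [:-(alt_coeff a i), alt_coeff a i:]) (\<lambda>_. [:0,1:]) (\<lambda>_. [:-1,0:]) m)"

lemma alexander_poly_alternating:
  "alexander_poly (map (\<lambda>k. (-1) ^ (k - 1) * (2 * a k)) [1..<m+1]) = alt_alexander a m"
proof -
  have half: "((-1)^i * (2 * x)) div 2 = (-1)^i * (x::int)" for i x
    by (cases "even i") auto
  have len: "length (map (\<lambda>k. (-1) ^ (k - 1) * (2 * a k)) [1..<m+1]) = m" by simp
  show ?thesis
    unfolding alexander_poly_tridiag alt_alexander_def len
    by (rule arg_cong[where f=det], rule tridiag_cong) (simp add: alt_coeff_def half nth_map_upt del: upt_Suc)
qed

lemma alt_alexander_rec:
  "alt_alexander a 0 = 1"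
  "alt_alexander a (Suc 0) = [:-(alt_coeff a 0), alt_coeff a 0:]"
  "alt_alexander a (Suc (Suc k)) = [:-(alt_coeff a (Suc k)), alt_coeff a (Suc k):] * alt_alexander a (Suc k)
     - [:0,1:] * [:-1,0:] * alt_alexander a k"
  unfolding alt_alexander_def
  by (simp_all only: det_tridiag_0 det_tridiag_1[simplified] det_tridiag_Suc_Suc)

fun norm_alex :: "(nat \<Rightarrow> real) \<Rightarrow> nat \<Rightarrow> real poly" where
  "norm_alex a 0 = 1"
| "norm_alex a (Suc 0) = smult (a 1) [:-1,1:]"
| "norm_alex a (Suc (Suc k)) = smult (a (Suc (Suc k))) [:-1,1:] * norm_alex a (Suc k) - [:0,1:] * norm_alex a k"

lemma poly_norm_alex_Suc_Suc:
  "poly (norm_alex a (Suc (Suc k))) x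
     = a (Suc (Suc k)) * (x - 1) * poly (norm_alex a (Suc k)) x - x * poly (norm_alex a k) x"
  by (simp add: algebra_simps)

fun sign_norm :: "nat \<Rightarrow> real" where
  "sign_norm 0 = 1" | "sign_norm (Suc 0) = 1" | "sign_norm (Suc (Suc k)) = - sign_norm k"

lemma sign_norm_Suc: "sign_norm (Suc k) = (-1)^k * sign_norm k"
  by (induction k rule: sign_norm.induct) auto

lemma sign_norm_nonzero: "sign_norm k \<noteq> 0"
  by (induction k rule: sign_norm.induct) auto

text \<open>Pointwise, A_m = sign_norm m * F_m: both satisfy the same recurrence once the
  alternating signs of the coefficients are absorbed into sign_norm.\<close>
lemma poly_alt_alexander:
  "poly (map_poly of_int (alt_alexander a m)) x = sign_norm m * poly (norm_alex (\<lambda>i. of_int (a i)) m) x"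
proof (induction m rule: induct_nat_012)
  case 0
  then show ?case by (simp add: alt_alexander_rec)
next
  case 1
  then show ?case
    by (simp only: alt_alexander_rec of_int_hom.map_poly_pCons_hom) (simp add: alt_coeff_def algebra_simps)
next
  case (ge2 k)
  let ?F = "norm_alex (\<lambda>i. real_of_int (a i))" and ?A = "real_of_int (a (Suc (Suc k)))"
  let ?c = "real_of_int (alt_coeff a (Suc k))"
  have coeff: "?c = (-1)^(Suc k) * ?A" by (simp add: alt_coeff_def)
  have sign: "(-1)^(Suc k) * sign_norm (Suc k) = sign_norm (Suc (Suc k))"
  proof -
    have "(-1::real)^k * (-1)^k = 1" by (simp flip: power_mult_distrib)
    then show ?thesis by (simp add: sign_norm_Suc mult.assoc[symmetric])
  qed
  have rec: "map_poly of_int (alt_alexander a (Suc (Suc k)))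
      = [:-?c, ?c:] * map_poly of_int (alt_alexander a (Suc k))
        - [:0,1:] * [:-1,0:] * map_poly of_int (alt_alexander a k)"
    unfolding alt_alexander_rec
    by (simp only: of_int_poly_hom.hom_mult of_int_poly_hom.hom_minus of_int_hom.map_poly_pCons_hom) simp
  have "poly (map_poly of_int (alt_alexander a (Suc (Suc k)))) x
      = ?c * (x - 1) * poly (map_poly of_int (alt_alexander a (Suc k))) x
        + x * poly (map_poly of_int (alt_alexander a k)) x"
    unfolding rec by (simp add: algebra_simps)
  also have "\<dots> = ?A * (x - 1) * ((-1)^(Suc k) * sign_norm (Suc k)) * poly (?F (Suc k)) x
      + x * sign_norm k * poly (?F k) x"
    unfolding coeff ge2 by (simp only: mult_ac)
  also have "\<dots> = ?A * (x - 1) * sign_norm (Suc (Suc k)) * poly (?F (Suc k)) x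
      + x * sign_norm k * poly (?F k) x"
    by (simp only: sign)
  also have "\<dots> = sign_norm (Suc (Suc k)) * (?A * (x - 1) * poly (?F (Suc k)) x - x * poly (?F k) x)"
    by (simp add: algebra_simps)
  also have "\<dots> = sign_norm (Suc (Suc k)) * poly (?F (Suc (Suc k))) x"
    by (simp only: poly_norm_alex_Suc_Suc)
  finally show ?case .
qed

lemma alexander_poly_real_alternating:
  "alexander_poly_real (map (\<lambda>k. (-1) ^ (k - 1) * (2 * a k)) [1..<m+1])
     = smult (sign_norm m) (norm_alex (\<lambda>i. of_int (a i)) m)"
  unfolding alexander_poly_real_def alexander_poly_alternating
  by (rule poly_eq_poly_eq_iff[THEN iffD1]) (simp add: poly_alt_alexander fun_eq_iff)

lemma proots_eq_distinct_zeros: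
  fixes p :: "'a::idom poly"
  assumes "p \<noteq> 0" "degree p \<le> length zs" "distinct zs" "\<forall>z\<in>set zs. poly p z = 0"
  shows "proots p = mset zs"
proof -
  have "count (mset zs) x \<le> count (proots p) x" for x
  proof (cases "x \<in> set zs")
    case True
    then have "order x p \<noteq> 0" using assms(1,4) order_root by blast
    then show ?thesis using assms(1,3) True by (simp add: distinct_count_atmost_1)
  next
    case False
    then show ?thesis by (metis count_eq_zero_iff le0 set_mset_mset)
  qed
  then have sub: "mset zs \<subseteq># proots p" by (simp add: subseteq_mset_def)
  have "size (proots p) \<le> size (mset zs)" using size_proots_le[of p] assms(2) by simp
  then show ?thesis using sub
    by (metis subset_mset.le_less mset_subset_size not_le)
qed

lemma poly_prod_linear_factors: "poly (\<Prod>y\<leftarrow>ys. [:-y,1:]) x = (\<Prod>y\<leftarrow>ys. x - y)"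
  for x :: "'a::comm_ring_1"
  by (induction ys) (auto simp: algebra_simps)

lemma poly_factor_distinct_zeros:
  fixes p :: "'a::idom poly"
  assumes "p \<noteq> 0" "degree p = length zs" "distinct zs" "\<forall>z\<in>set zs. poly p z = 0"
  shows "p = smult (lead_coeff p) (\<Prod>y\<leftarrow>zs. [:-y,1:])"
  using assms
proof (induction zs arbitrary: p)
  case Nil
  then obtain c where "p = [:c:]" by (metis degree_eq_zeroE list.size(3))
  then show ?case by simp
next
  case (Cons y zs)
  have "[:-y,1:] dvd p" using Cons.prems(4) by (simp add: poly_eq_0_iff_dvd)
  then obtain q where q: "p = [:-y,1:] * q" by (auto elim: dvdE)
  have q0: "q \<noteq> 0" using Cons.prems(1) q by auto
  have "degree p = Suc (degree q)" unfolding q by (subst degree_mult_eq) (use q0 in auto)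
  then have deg_q: "degree q = length zs" using Cons.prems(2) by simp
  have zeros_q: "\<forall>z\<in>set zs. poly q z = 0"
    using Cons.prems(3,4) q by auto
  have lead: "lead_coeff p = lead_coeff q" unfolding q lead_coeff_mult by simp
  have "q = smult (lead_coeff q) (\<Prod>y\<leftarrow>zs. [:-y,1:])"
    using Cons.IH[OF q0 deg_q _ zeros_q] Cons.prems(3) by simp
  with q have "p = [:-y,1:] * smult (lead_coeff q) (\<Prod>y\<leftarrow>zs. [:-y,1:])" by simp
  also have "\<dots> = smult (lead_coeff p) (\<Prod>y\<leftarrow>y#zs. [:-y,1:])"
    using lead by (simp only: mult_smult_right list.map prod_list.Cons)
  finally show ?case .
qed

lemma sorted_wrt_less_nth_le:
  "sorted_wrt (<) (xs::real list) \<Longrightarrow> i \<le> j \<Longrightarrow> j < length xs \<Longrightarrow> xs!i \<le> xs!j"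
  using sorted_wrt_nth_less[of "(<)" xs i j] by (cases "i = j") auto

lemma position_in_sorted:
  fixes ys :: "real list"
  assumes "sorted_wrt (<) ys" "j \<le> length ys"
    "0 < j \<Longrightarrow> ys ! (j-1) < w" "j < length ys \<Longrightarrow> w < ys ! j" "i < length ys"
  shows "w < ys ! i \<longleftrightarrow> j \<le> i" and "ys ! i < w \<longleftrightarrow> i < j"
proof -
  have above: "w < ys ! i" if "j \<le> i"
    using sorted_wrt_less_nth_le[OF assms(1) that assms(5)] assms(4) that assms(5) by auto
  have below: "ys ! i < w" if "i < j"
  proof -
    have "ys ! i \<le> ys ! (j-1)" using sorted_wrt_less_nth_le[OF assms(1), of i "j-1"] assms(2) that by simp
    then show ?thesis using assms(3) that by simp
  qed
  show "w < ys ! i \<longleftrightarrow> j \<le> i" and "ys ! i < w \<longleftrightarrow> i < j"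
    using above below by (meson not_le order.asym)+
qed

lemma sgn_prod_differences:
  fixes w :: real
  assumes "w \<notin> set ys"
  shows "sgn (\<Prod>y\<leftarrow>ys. w - y) = (-1) ^ length (filter (\<lambda>y. w < y) ys)"
  using assms
proof (induction ys)
  case (Cons y ys)
  have "sgn (w - y) = (if w < y then -1 else 1)" using Cons.prems by auto
  then show ?case using Cons by (simp add: sgn_mult)
qed simp

lemma sgn_poly_between_zeros:
  fixes q :: "real poly" and ys :: "real list"
  assumes lead: "lead_coeff q > 0" and deg: "degree q = length ys" and sorted: "sorted_wrt (<) ys"
    and zeros: "\<forall>y\<in>set ys. poly q y = 0"
    and j: "j \<le> length ys" "0 < j \<Longrightarrow> ys ! (j-1) < w" "j < length ys \<Longrightarrow> w < ys ! j"
  shows "sgn (poly q w) = (-1) ^ (length ys - j)"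
proof -
  note pos = position_in_sorted[OF sorted j]
  have "q = smult (lead_coeff q) (\<Prod>y\<leftarrow>ys. [:-y,1:])"
    by (rule poly_factor_distinct_zeros) (use lead deg zeros sorted[unfolded strict_sorted_iff] in auto)
  then have factor: "poly q w = lead_coeff q * (\<Prod>y\<leftarrow>ys. w - y)"
    by (metis poly_prod_linear_factors poly_smult)
  have "w \<notin> set ys"
  proof
    assume "w \<in> set ys"
    then obtain i where "i < length ys" "ys ! i = w" by (auto simp: in_set_conv_nth)
    then show False using pos(1)[of i] pos(2)[of i] by auto
  qed
  then have "sgn (\<Prod>y\<leftarrow>ys. w - y) = (-1) ^ length (filter (\<lambda>y. w < y) ys)"
    by (rule sgn_prod_differences)
  moreover have "{i. i < length ys \<and> w < ys ! i} = {j..<length ys}"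
    using pos(1) j(1) by auto
  then have "length (filter (\<lambda>y. w < y) ys) = length ys - j"
    by (simp add: length_filter_conv_card)
  ultimately show ?thesis
    using lead by (simp add: factor sgn_mult)
qed

lemma zeros_between_sign_changes:
  fixes p :: "real poly" and bs :: "real list"
  assumes sorted: "sorted_wrt (<) bs"
    and change: "\<And>j. Suc j < length bs \<Longrightarrow> poly p (bs ! j) * poly p (bs ! Suc j) < 0"
  obtains ws where "length ws = length bs - 1" "sorted_wrt (<) ws"
    "\<And>j. Suc j < length bs \<Longrightarrow> bs ! j < ws ! j \<and> ws ! j < bs ! Suc j \<and> poly p (ws ! j) = 0"
proof -
  have "\<exists>w. bs ! j < w \<and> w < bs ! Suc j \<and> poly p w = 0" if "Suc j < length bs" for j
    using poly_IVT[OF sorted_wrt_nth_less[OF sorted _ that] change[OF that]] that by auto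
  then obtain W where W: "\<And>j. Suc j < length bs \<Longrightarrow> bs ! j < W j \<and> W j < bs ! Suc j \<and> poly p (W j) = 0"
    by metis
  define ws where "ws = map W [0..<length bs - 1]"
  have "sorted_wrt (<) ws"
    unfolding ws_def sorted_wrt_iff_nth_less
  proof (intro allI impI)
    fix i j assume "i < j" "j < length (map W [0..<length bs - 1])"
    then have "W i < bs ! Suc i" "bs ! Suc i \<le> bs ! j" "bs ! j < W j"
      using W[of i] W[of j] sorted_wrt_less_nth_le[OF sorted, of "Suc i" j] by auto
    then show "map W [0..<length bs - 1] ! i < map W [0..<length bs - 1] ! j"
      using \<open>i < j\<close> \<open>j < _\<close> by simp
  qed
  moreover have "bs ! j < ws ! j \<and> ws ! j < bs ! Suc j \<and> poly p (ws ! j) = 0" if "Suc j < length bs" for j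
    using W[OF that] that by (simp add: ws_def)
  ultimately show ?thesis using that[of ws] by (simp add: ws_def)
qed

lemma norm_alex_coeffs: "degree (norm_alex a k) \<le> k \<and> coeff (norm_alex a k) k = (\<Prod>i=1..k. a i)"
proof (induction a k rule: norm_alex.induct)
  case (2 a)
  then show ?case by (simp add: degree_smult_le)
next
  case (3 a k)
  let ?F = "norm_alex a"
  have first: "degree (smult (a (Suc (Suc k))) [:-1,1:] * ?F (Suc k)) \<le> Suc (Suc k)"
    using degree_mult_le[of "smult (a (Suc (Suc k))) [:-1,1:]" "?F (Suc k)"]
      degree_smult_le[of "a (Suc (Suc k))" "[:-1,1:]"] 3 by simp
  have second: "degree ([:0,1:] * ?F k) \<le> Suc (Suc k)"
    using degree_mult_le[of "[:0,1:]" "?F k"] 3 by simp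
  have deg: "degree (?F (Suc (Suc k))) \<le> Suc (Suc k)"
    using degree_diff_le[OF first second] by simp
  have "coeff (?F (Suc k)) (Suc (Suc k)) = 0" "coeff (?F k) (Suc k) = 0"
    using 3 by (simp_all add: coeff_eq_0)
  then have "coeff (?F (Suc (Suc k))) (Suc (Suc k)) = a (Suc (Suc k)) * coeff (?F (Suc k)) (Suc k)"
    by (simp add: mult_pCons_left)
  then show ?case using deg 3 by (simp add: prod.cl_ivl_Suc)
qed simp

text \<open>At t = 0 the recurrence reads F_(k+2)(0) = -a_(k+2) F_(k+1)(0).\<close>
lemma poly_norm_alex_0: "poly (norm_alex a k) 0 = (-1)^k * (\<Prod>i=1..k. a i)"
  by (induction a k rule: norm_alex.induct) (simp_all add: prod.cl_ivl_Suc)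

lemma norm_alex_positive:
  assumes "\<And>i. 1 \<le> i \<Longrightarrow> i \<le> k \<Longrightarrow> 0 < a i"
  shows "degree (norm_alex a k) = k" "lead_coeff (norm_alex a k) > 0"
    "sgn (poly (norm_alex a k) 0) = (-1)^k"
proof -
  have prod: "(\<Prod>i=1..k. a i) > 0" using assms by (intro prod_pos) auto
  then have "coeff (norm_alex a k) k \<noteq> 0" using norm_alex_coeffs[of a k] by (metis order_less_irrefl)
  then show deg: "degree (norm_alex a k) = k" using norm_alex_coeffs[of a k] le_degree by fastforce
  show "lead_coeff (norm_alex a k) > 0" using deg norm_alex_coeffs[of a k] prod by simp
  show "sgn (poly (norm_alex a k) 0) = (-1)^k"
    using prod by (simp add: poly_norm_alex_0 sgn_mult)
qed

text \<open>The induction invariant: ys lists the k zeros of F_k in increasing order, they are positive,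
  and F_(k-1) alternates in sign on them, positive at the largest one.\<close>
definition alternating_zeros :: "(nat \<Rightarrow> real) \<Rightarrow> nat \<Rightarrow> real list \<Rightarrow> bool" where
  "alternating_zeros a k ys \<longleftrightarrow> length ys = k \<and> sorted_wrt (<) ys
     \<and> (\<forall>y\<in>set ys. 0 < y \<and> poly (norm_alex a k) y = 0)
     \<and> (\<forall>i<k. sgn (poly (norm_alex a (k-1)) (ys ! i)) = (-1)^(k-1-i))"

text \<open>At a zero y of F_k the recurrence reduces to F_(k+1)(y) = -y F_(k-1)(y), so the sign
  alternation of F_(k-1) on the zeros of F_k carries over, reversed, to F_(k+1).\<close>
lemma sgn_norm_alex_at_zeros:
  assumes "1 \<le> k" and zs: "alternating_zeros a k ys" and "i < k"
  shows "sgn (poly (norm_alex a (Suc k)) (ys ! i)) = (-1)^(k-i)"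
proof -
  obtain kk where k: "k = Suc kk" using \<open>1 \<le> k\<close> by (cases k) auto
  have y: "0 < ys ! i" "poly (norm_alex a k) (ys ! i) = 0"
    and alt: "sgn (poly (norm_alex a kk) (ys ! i)) = (-1)^(kk-i)"
    using zs \<open>i < k\<close> unfolding alternating_zeros_def k by auto
  then have "poly (norm_alex a (Suc k)) (ys ! i) = - (ys ! i) * poly (norm_alex a kk) (ys ! i)"
    unfolding k poly_norm_alex_Suc_Suc by simp
  then have "sgn (poly (norm_alex a (Suc k)) (ys ! i)) = - sgn (poly (norm_alex a kk) (ys ! i))"
    using y by (simp add: sgn_mult)
  then show ?thesis using alt \<open>i < k\<close> k by (simp add: Suc_diff_le)
qed

lemma poly_positive_beyond:
  fixes p :: "real poly"
  assumes "lead_coeff p > 0"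
  obtains M where "x < M" "poly p M > 0"
proof -
  obtain x0 where "\<forall>y\<ge>x0. lead_coeff p \<le> poly p y" using poly_pinfty_gt_lc[OF assms] by blast
  then have "poly p (max x0 (x + 1)) > 0"
    using assms by (meson max.cobounded1 order_less_le_trans)
  then show ?thesis using that[of "max x0 (x + 1)"] by simp
qed

lemma norm_alex_sign_changes:
  assumes pos: "\<And>i. 1 \<le> i \<Longrightarrow> i \<le> Suc k \<Longrightarrow> 0 < a i" and "1 \<le> k"
    and zs: "alternating_zeros a k ys"
  obtains M where "sorted_wrt (<) (0 # ys @ [M])"
    "\<And>j. j \<le> Suc k \<Longrightarrow> sgn (poly (norm_alex a (Suc k)) ((0 # ys @ [M]) ! j)) = (-1)^(Suc k - j)"
proof -
  let ?p = "norm_alex a (Suc k)"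
  have len: "length ys = k" and sorted: "sorted_wrt (<) ys" and ys_pos: "\<forall>y\<in>set ys. 0 < y"
    using zs unfolding alternating_zeros_def by auto
  have p_lead: "lead_coeff ?p > 0" and p_at_0: "sgn (poly ?p 0) = (-1)^Suc k"
    using norm_alex_positive[of "Suc k" a] pos by auto
  obtain M where M: "ys ! (k-1) < M" "poly ?p M > 0"
    using poly_positive_beyond[OF p_lead] by blast
  have "y < M" if "y \<in> set ys" for y
  proof -
    obtain i where "i < k" "y = ys ! i" using \<open>y \<in> set ys\<close> len by (auto simp: in_set_conv_nth)
    moreover have "ys ! i \<le> ys ! (k-1)"
      using sorted_wrt_less_nth_le[OF sorted, of i "k-1"] \<open>i < k\<close> len by simp
    ultimately show ?thesis using M(1) by simp
  qed
  moreover have "0 < M"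
    using ys_pos M(1) nth_mem[of "k-1" ys] len \<open>1 \<le> k\<close> by fastforce
  ultimately have "sorted_wrt (<) (0 # ys @ [M])"
    using sorted ys_pos by (simp add: sorted_wrt_append)
  moreover have "sgn (poly ?p ((0 # ys @ [M]) ! j)) = (-1)^(Suc k - j)" if j: "j \<le> Suc k" for j
  proof -
    consider "j = 0" | i where "j = Suc i" "i < k" | "j = Suc k"
      using j by (cases j) (auto simp: nat_less_le)
    then show ?thesis
    proof cases
      case 2
      then show ?thesis
        using sgn_norm_alex_at_zeros[OF \<open>1 \<le> k\<close> zs] len by (simp add: nth_append)
    next
      case 3
      then show ?thesis using M(2) len by (simp add: nth_append)
    qed (use p_at_0 in simp)
  qed
  ultimately show ?thesis using that by blast
qed

lemma alternating_zeros_step: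
  assumes pos: "\<And>i. 1 \<le> i \<Longrightarrow> i \<le> Suc k \<Longrightarrow> 0 < a i" and "1 \<le> k"
    and zs: "alternating_zeros a k ys"
  obtains ws where "alternating_zeros a (Suc k) ws" "\<forall>i<k. ws ! i < ys ! i \<and> ys ! i < ws ! Suc i"
proof -
  let ?p = "norm_alex a (Suc k)" and ?q = "norm_alex a k"
  have len: "length ys = k" and sorted: "sorted_wrt (<) ys"
    and zeros: "\<forall>y\<in>set ys. 0 < y \<and> poly ?q y = 0"
    using zs unfolding alternating_zeros_def by auto
  obtain M where bs_sorted: "sorted_wrt (<) (0 # ys @ [M])"
    and bs_sgn: "\<And>j. j \<le> Suc k \<Longrightarrow> sgn (poly ?p ((0 # ys @ [M]) ! j)) = (-1)^(Suc k - j)"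
    using norm_alex_sign_changes[OF pos \<open>1 \<le> k\<close> zs] by blast
  define bs where "bs = 0 # ys @ [M]"
  have bs_len: "length bs = Suc (Suc k)" by (simp add: bs_def len)
  have bs_ys: "bs ! Suc i = ys ! i" if "i < k" for i using that len by (simp add: bs_def nth_append)
  have change: "poly ?p (bs ! j) * poly ?p (bs ! Suc j) < 0" if "Suc j < length bs" for j
  proof -
    have "sgn (poly ?p (bs ! j) * poly ?p (bs ! Suc j)) = (-1)^(Suc k - j) * (-1)^(k - j)"
      using bs_sgn[of j] bs_sgn[of "Suc j"] that bs_len by (simp add: bs_def sgn_mult)
    also have "\<dots> = -1" using that bs_len by (simp add: Suc_diff_le)
    finally show ?thesis by (simp only: sgn_1_neg)
  qed
  obtain ws where ws_len: "length ws = length bs - 1" and ws_sorted: "sorted_wrt (<) ws"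
    and gaps: "\<And>j. Suc j < length bs \<Longrightarrow> bs ! j < ws ! j \<and> ws ! j < bs ! Suc j \<and> poly ?p (ws ! j) = 0"
    using zeros_between_sign_changes[of bs ?p] bs_sorted change unfolding bs_def by blast
  have ws: "bs ! j < ws ! j \<and> ws ! j < bs ! Suc j \<and> poly ?p (ws ! j) = 0" if "j \<le> k" for j
    using gaps[of j] that bs_len by simp
  have q_sgn: "sgn (poly ?q (ws ! j)) = (-1)^(k - j)" if j: "j \<le> k" for j
  proof -
    have "sgn (poly ?q (ws ! j)) = (-1)^(length ys - j)"
    proof (rule sgn_poly_between_zeros[OF _ _ sorted])
      show "0 < j \<Longrightarrow> ys ! (j - 1) < ws ! j"
        using ws[OF j] bs_ys[of "j-1"] j by (cases j) auto
      show "j < length ys \<Longrightarrow> ws ! j < ys ! j"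
        using ws[OF j] bs_ys[of j] len by simp
    qed (use norm_alex_positive[of k a] pos zeros len j in auto)
    then show ?thesis using len by simp
  qed
  have ws_pos: "0 < ws ! j" if "j \<le> k" for j
    using ws[OF that] sorted_wrt_less_nth_le[OF bs_sorted, of 0 j] that len by (simp add: bs_def)
  have "alternating_zeros a (Suc k) ws"
    unfolding alternating_zeros_def
    using ws_len bs_len ws_sorted ws ws_pos q_sgn by (auto simp: in_set_conv_nth)
  moreover have "\<forall>i<k. ws ! i < ys ! i \<and> ys ! i < ws ! Suc i"
    using ws bs_ys by (metis Suc_leI less_imp_le_nat)
  ultimately show ?thesis using that by blast
qed

text \<open>The invariant holds for every k \<ge> 1, starting from the zero 1 of F_1 = a_1 (t - 1).\<close>
lemma alternating_zeros_exist:
  assumes pos: "\<And>i. 1 \<le> i \<Longrightarrow> i \<le> k \<Longrightarrow> 0 < a i" and "1 \<le> k"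
  shows "\<exists>ys. alternating_zeros a k ys"
  using \<open>1 \<le> k\<close>
proof (induction rule: dec_induct)
  case base
  have "alternating_zeros a 1 [1]" by (simp add: alternating_zeros_def)
  then show ?case by blast
next
  case (step m)
  then obtain ys where "alternating_zeros a m ys" by blast
  moreover have "\<And>i. 1 \<le> i \<Longrightarrow> i \<le> Suc m \<Longrightarrow> 0 < a i" using pos step(2) by simp
  ultimately show ?case using alternating_zeros_step[of m a] step(1) by metis
qed

lemma norm_alex_interlacing:
  assumes pos: "\<And>i. 1 \<le> i \<Longrightarrow> i \<le> Suc k \<Longrightarrow> 0 < a i" and "1 \<le> k"
  obtains ws ys where "length ws = Suc k" "sorted_wrt (<) ws" "\<forall>w\<in>set ws. poly (norm_alex a (Suc k)) w = 0"
    "length ys = k" "sorted_wrt (<) ys" "\<forall>y\<in>set ys. poly (norm_alex a k) y = 0"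
    "\<forall>i<k. ws ! i < ys ! i \<and> ys ! i < ws ! Suc i"
proof -
  obtain ys where ys: "alternating_zeros a k ys"
    using alternating_zeros_exist[of k a] pos \<open>1 \<le> k\<close> by auto
  obtain ws where "alternating_zeros a (Suc k) ws" "\<forall>i<k. ws ! i < ys ! i \<and> ys ! i < ws ! Suc i"
    using alternating_zeros_step[OF pos \<open>1 \<le> k\<close> ys] by blast
  with ys show ?thesis using that unfolding alternating_zeros_def by auto
qed

text \<open>Viewing real polynomials as complex ones: the homomorphism facts (degree, nonvanishing,
  evaluation at real points) become simp rules.\<close>
interpretation of_real_poly: map_poly_inj_idom_hom "of_real :: real \<Rightarrow> complex"
  by unfold_locales auto

lemma proots_complex_of_real:
  fixes p :: "real poly"
  assumes "p \<noteq> 0" "degree p = length ws" "distinct ws" "\<forall>w\<in>set ws. poly p w = 0"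
  shows "proots (map_poly complex_of_real p) = mset (map complex_of_real ws)"
proof (rule proots_eq_distinct_zeros)
  show "distinct (map complex_of_real ws)"
    using assms(3) by (simp add: distinct_map inj_on_def)
qed (use assms in auto)

lemma real_rooted_if_distinct_zeros:
  fixes p :: "real poly"
  assumes "p \<noteq> 0" "degree p = length ws" "distinct ws" "\<forall>w\<in>set ws. poly p w = 0"
  shows "real_rooted p"
  unfolding real_rooted_def
proof (intro allI impI)
  fix z assume "poly (map_poly complex_of_real p) z = 0"
  then have "z \<in># proots (map_poly complex_of_real p)" using assms(1) by simp
  then show "z \<in> \<real>" unfolding proots_complex_of_real[OF assms] by auto
qed

lemma no_repeated_zeros_if_distinct_zeros:
  fixes p :: "real poly"
  assumes "p \<noteq> 0" "degree p = length ws" "distinct ws" "\<forall>w\<in>set ws. poly p w = 0"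
  shows "no_repeated_zeros p"
  unfolding no_repeated_zeros_def rsquarefree_def
proof (intro conjI allI)
  show nz: "map_poly complex_of_real p \<noteq> 0" using assms(1) by simp
  have "distinct (map complex_of_real ws)"
    using assms(3) by (simp add: distinct_map inj_on_def)
  then have "count (proots (map_poly complex_of_real p)) z \<le> 1" for z
    unfolding proots_complex_of_real[OF assms] by (simp add: distinct_count_atmost_1)
  then show "order z (map_poly complex_of_real p) = 0 \<or> order z (map_poly complex_of_real p) = 1" for z
    using nz by (metis count_proots le_SucE le_zero_eq One_nat_def)
qed

lemma strictly_interlaced_disjoint:
  fixes ws ys :: "real list"
  assumes "sorted_wrt (<) ws" "sorted_wrt (<) ys" "length ws = Suc (length ys)"
    and interlace: "\<forall>i<length ys. ws ! i < ys ! i \<and> ys ! i < ws ! Suc i"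
  shows "set ws \<inter> set ys = {}"
proof (rule ccontr)
  assume "set ws \<inter> set ys \<noteq> {}"
  then obtain i j where i: "i < length ws" and j: "j < length ys" and eq: "ws ! i = ys ! j"
    by (fastforce simp: in_set_conv_nth)
  show False
  proof (cases "i \<le> j")
    case True
    then have "ws ! i < ys ! i" "ys ! i \<le> ys ! j"
      using interlace sorted_wrt_less_nth_le[OF assms(2) True j] j by auto
    then show False using eq by simp
  next
    case False
    then have "ys ! j < ws ! Suc j" "ws ! Suc j \<le> ws ! i"
      using interlace j sorted_wrt_less_nth_le[OF assms(1), of "Suc j" i] i by auto
    then show False using eq by simp
  qed
qed

lemma strictly_interlaced_zeros:
  fixes P Q :: "real poly"
  assumes P: "P \<noteq> 0" "degree P = length ws" "sorted_wrt (<) ws" "\<forall>w\<in>set ws. poly P w = 0"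
    and Q: "Q \<noteq> 0" "degree Q = length ys" "sorted_wrt (<) ys" "\<forall>y\<in>set ys. poly Q y = 0"
    and len: "length ws = Suc (length ys)"
    and interlace: "\<forall>i<length ys. ws ! i < ys ! i \<and> ys ! i < ws ! Suc i"
  shows "real_rooted P \<and> real_rooted Q \<and> no_repeated_zeros (P * Q) \<and> interlaced P Q"
proof (intro conjI)
  have dist: "distinct ws" "distinct ys"
    using P(3) Q(3) by (simp_all add: strict_sorted_iff)
  show "real_rooted P" using real_rooted_if_distinct_zeros[OF P(1,2) dist(1) P(4)] .
  show "real_rooted Q" using real_rooted_if_distinct_zeros[OF Q(1,2) dist(2) Q(4)] .
  have "distinct (ws @ ys)"
    using dist strictly_interlaced_disjoint[OF P(3) Q(3) len interlace] by simp
  moreover have "degree (P * Q) = length (ws @ ys)"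
    using P(1,2) Q(1,2) by (simp add: degree_mult_eq)
  ultimately show "no_repeated_zeros (P * Q)"
    using no_repeated_zeros_if_distinct_zeros[of "P * Q" "ws @ ys"] P Q by auto
  have "proots P = mset ws" "proots Q = mset ys"
    using proots_eq_distinct_zeros[of P ws] proots_eq_distinct_zeros[of Q ys] P Q dist by auto
  moreover have "sort ws = ws" "sort ys = ys"
    using P(3) Q(3) by (simp_all add: sorted_sort_id strict_sorted_iff)
  ultimately show "interlaced P Q"
    unfolding interlaced_def interlaced_lists_def using len interlace
    by (auto simp: sorted_list_of_multiset_mset intro: less_imp_le)
qed

theorem theorem9p4:
  fixes n :: nat and a :: "nat \<Rightarrow> int"
  assumes "n \<ge> 2"
    and "\<And>k. 1 \<le> k \<Longrightarrow> k \<le> n \<Longrightarrow> a k > 0"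
  defines "s \<equiv> map (\<lambda>k. (-1) ^ (k - 1) * (2 * a k)) [1..<n+1]"
    and "s' \<equiv> map (\<lambda>k. (-1) ^ (k - 1) * (2 * a k)) [1..<n]"
  shows "real_rooted (alexander_poly_real s) \<and> real_rooted (alexander_poly_real s')
    \<and> no_repeated_zeros (alexander_poly_real s * alexander_poly_real s')
    \<and> interlaced (alexander_poly_real s) (alexander_poly_real s')"
proof -
  define k where "k = n - 1"
  define ar where "ar i = real_of_int (a i)" for i
  have n: "n = Suc k" "1 \<le> k" using \<open>n \<ge> 2\<close> by (simp_all add: k_def)
  have pos: "\<And>i. 1 \<le> i \<Longrightarrow> i \<le> Suc k \<Longrightarrow> 0 < ar i" using assms(2) n by (simp add: ar_def)
  have s: "alexander_poly_real s = smult (sign_norm (Suc k)) (norm_alex ar (Suc k))"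
    unfolding s_def ar_def n(1) by (rule alexander_poly_real_alternating)
  have s': "alexander_poly_real s' = smult (sign_norm k) (norm_alex ar k)"
    unfolding s'_def ar_def n(1) using alexander_poly_real_alternating[of a k] by simp
  obtain ws ys where zeros: "length ws = Suc k" "sorted_wrt (<) ws" "\<forall>w\<in>set ws. poly (norm_alex ar (Suc k)) w = 0"
    "length ys = k" "sorted_wrt (<) ys" "\<forall>y\<in>set ys. poly (norm_alex ar k) y = 0"
    and interlace: "\<forall>i<k. ws ! i < ys ! i \<and> ys ! i < ws ! Suc i"
    using norm_alex_interlacing[of k ar, OF pos n(2)] by blast
  have "norm_alex ar (Suc k) \<noteq> 0" "norm_alex ar k \<noteq> 0"
    using norm_alex_positive[of _ ar] pos by (metis le_SucI leading_coeff_0_iff less_irrefl)+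
  then show ?thesis
    unfolding s s'
    by (intro strictly_interlaced_zeros)
      (use zeros interlace norm_alex_positive[of _ ar] pos sign_norm_nonzero in auto)
qed

end
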